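(* Let $P$ be a finite poset, $n\in\mathbb Z$ and $\xi\in\mathbb Z^{P^-}$. Then $T^\xi\in\omega^{(n)}$ if and only if $\xi\in S^{(n)}$. In particular $\omega^{(n)}=\bigoplus_{\xi\in S^{(n)}}\mathbb K T^\xi$.
   Context: $P^-=P\cup\{-\infty\}$ with $-\infty<z$ for all $z\in P$. For a function $\xi$ and finite $B$ in its domain, $\xi^+(B)=\sum_{b\in B}\xi(b)$. $\mathcal C(P)=\{f\in\mathbb R^P: f\ge0,\ f^+(C)\le1$ for every chain $C\}$ (chain polytope). For $f\in\mathbb Z^{P^-}$, $T^f=\prod_{x\in P^-}T_x^{f(x)}$ (Laurent monomial in indeterminates $T_x$), $\deg T^f=f(-\infty)$. For $n\in\mathbb Z$, $S^{(n)}=\{\xi\in\mathbb Z^{P^-}:\xi(x)\ge n\ \forall x\in P,\ \xi(-\infty)\ge\xi^+(C)+n$ for every maximal chain $C$ of $P\}$. $R=\mathbb K[\mathcal C(P)]=\bigoplus_{\xi\in S^{(0)}}\mathbb K T^\xi$ is the Ehrhart ring of $\mathcal C(P)$ over a field $\mathbb K$ and $\omega=\bigoplus_{\xi\in S^{(1)}}\mathbb KT^\xi$ its canonical ideal. $\omega^{(n)}$ is the $n$-th power of $\omega$ in the group of divisorial fractional ideals of $R$ (product $I\cdot J=R:_{Q(R)}(R:_{Q(R)}IJ)$); $\omega^{(0)}=R$, $\omega^{(-1)}=R:_{Q(R)}\omega$. *)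

theory Defs
  imports "HOL-Library.Poly_Mapping" "HOL-Library.Option_ord"
          "HOL-Computational_Algebra.Fraction_Field"
begin

text \<open>The linear order on the ambient type 'a is only used
 to give the Laurent polynomial ring its integral-domain instance; it plays no
 role in the mathematics. P^- is modelled as None (= -infinity) plus Some ` P.\<close>

definition Pminus :: "'a set \<Rightarrow> 'a option set" where
  "Pminus P = insert None (Some ` P)"

definition is_chain :: "'a set \<Rightarrow> 'a rel \<Rightarrow> 'a set \<Rightarrow> bool" where
  "is_chain P r C \<longleftrightarrow> C \<subseteq> P \<and> (\<forall>x\<in>C. \<forall>y\<in>C. (x,y) \<in> r \<or> (y,x) \<in> r)"

definition is_max_chain :: "'a set \<Rightarrow> 'a rel \<Rightarrow> 'a set \<Rightarrow> bool" where
  "is_max_chain P r C \<longleftrightarrow> is_chain P r C \<and> (\<forall>D. is_chain P r D \<and> C \<subseteq> D \<longrightarrow> D = C)"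

definition Sset :: "'a set \<Rightarrow> 'a rel \<Rightarrow> int \<Rightarrow> ('a option \<Rightarrow>\<^sub>0 int) set" where
  "Sset P r n = {\<xi>. Poly_Mapping.keys \<xi> \<subseteq> Pminus P \<and> (\<forall>x\<in>P. Poly_Mapping.lookup \<xi> (Some x) \<ge> n) \<and>
      (\<forall>C. is_max_chain P r C \<longrightarrow> Poly_Mapping.lookup \<xi> None \<ge> (\<Sum>x\<in>C. Poly_Mapping.lookup \<xi> (Some x)) + n)}"

text \<open>Laurent polynomials over the field 'k in the indeterminates T_x, x in P^-.\<close>
type_synonym ('a, 'k) laurent = "('a option \<Rightarrow>\<^sub>0 int) \<Rightarrow>\<^sub>0 'k"

definition Tmon :: "('a option \<Rightarrow>\<^sub>0 int) \<Rightarrow> ('a, 'k::field) laurent" where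
  "Tmon \<xi> = Poly_Mapping.single \<xi> 1"

definition mon_span :: "'a set \<Rightarrow> 'a rel \<Rightarrow> int \<Rightarrow> ('a, 'k::field) laurent set" where
  "mon_span P r n = {f. Poly_Mapping.keys f \<subseteq> Sset P r n}"

definition emb :: "('a::linorder, 'k::field) laurent \<Rightarrow> ('a, 'k) laurent fract" where
  "emb f = Fract f 1"

definition ehrhart_ring :: "'a::linorder set \<Rightarrow> 'a rel \<Rightarrow> ('a, 'k::field) laurent fract set" where
  "ehrhart_ring P r = emb ` mon_span P r 0"

definition canonical_ideal :: "'a::linorder set \<Rightarrow> 'a rel \<Rightarrow> ('a, 'k::field) laurent fract set" where
  "canonical_ideal P r = emb ` mon_span P r 1"

definition quot_field :: "'f::field set \<Rightarrow> 'f set" where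
  "quot_field R = {a / b | a b. a \<in> R \<and> b \<in> R \<and> b \<noteq> 0}"

definition colon :: "'f::field set \<Rightarrow> 'f set \<Rightarrow> 'f set" where
  "colon R I = {q \<in> quot_field R. \<forall>x\<in>I. q * x \<in> R}"

definition ideal_prod :: "'f::field set \<Rightarrow> 'f set \<Rightarrow> 'f set \<Rightarrow> 'f set" where
  "ideal_prod R I J = \<Inter>{M. 0 \<in> M \<and> {x * y | x y. x \<in> I \<and> y \<in> J} \<subseteq> M \<and>
      (\<forall>a\<in>M. \<forall>b\<in>M. a + b \<in> M) \<and> (\<forall>c\<in>R. \<forall>a\<in>M. c * a \<in> M)}"

text \<open>Product in the group of divisorial fractional ideals.\<close>
definition div_prod :: "'f::field set \<Rightarrow> 'f set \<Rightarrow> 'f set \<Rightarrow> 'f set" where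
  "div_prod R I J = colon R (colon R (ideal_prod R I J))"

primrec div_pow_nat :: "'f::field set \<Rightarrow> 'f set \<Rightarrow> nat \<Rightarrow> 'f set" where
  "div_pow_nat R I 0 = R"
| "div_pow_nat R I (Suc k) = div_prod R I (div_pow_nat R I k)"

text \<open>n-th power in the divisorial group; the inverse of I is R : I.\<close>
definition div_pow :: "'f::field set \<Rightarrow> 'f set \<Rightarrow> int \<Rightarrow> 'f set" where
  "div_pow R I n = (if n \<ge> 0 then div_pow_nat R I (nat n) else div_pow_nat R (colon R I) (nat (- n)))"

definition omega_pow :: "'a::linorder set \<Rightarrow> 'a rel \<Rightarrow> int \<Rightarrow> ('a, 'k::field) laurent fract set" where
  "omega_pow P r n = div_pow (ehrhart_ring P r) (canonical_ideal P r) n"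

end

theory Submission imports Defs begin

text \<open>Let E(n) be the span of the monomials T^\<xi> with \<xi> in S(n), so that R = E(0) and
  \<omega> = E(1). Since S(a) + S(b) \<subseteq> S(a + b), we have E(a) E(b) \<subseteq> E(a + b). Conversely, if
  \<zeta> + S(a) \<subseteq> S(c) then \<zeta> \<in> S(c - a): test \<zeta> against a constant vector of S(a) and, for
  each maximal chain C, against a vector of S(a) whose chain inequality is an equality at C.
  As monomials are units of the Laurent ring, this gives R : E(a) = E(-a) and
  R : E(a) E(b) = E(-a-b), so the divisorial product of E(a) and E(b) is E(a + b), and
  \<omega>^(n) = E(n).\<close>

lemma finite_Pminus: "finite P \<Longrightarrow> finite (Pminus P)"
  by (simp add: Pminus_def)

lemma max_chain_subset: "is_max_chain P r C \<Longrightarrow> C \<subseteq> P"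
  by (simp add: is_max_chain_def is_chain_def)

lemma Sset_add:
  assumes "\<xi> \<in> Sset P r a" "\<eta> \<in> Sset P r b"
  shows "\<xi> + \<eta> \<in> Sset P r (a + b)"
proof -
  have "Poly_Mapping.keys (\<xi> + \<eta>) \<subseteq> Pminus P"
    using keys_add[of \<xi> \<eta>] assms by (auto simp: Sset_def)
  moreover have "\<forall>x\<in>P. Poly_Mapping.lookup (\<xi> + \<eta>) (Some x) \<ge> a + b"
    using assms by (simp add: Sset_def lookup_add add_mono)
  moreover have "Poly_Mapping.lookup (\<xi> + \<eta>) None \<ge> (\<Sum>x\<in>C. Poly_Mapping.lookup (\<xi> + \<eta>) (Some x)) + (a + b)"
    if "is_max_chain P r C" for C
    using assms that by (fastforce simp: Sset_def lookup_add sum.distrib)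
  ultimately show ?thesis
    unfolding Sset_def by blast
qed

lemma Sset_antimono: "b \<le> a \<Longrightarrow> Sset P r a \<subseteq> Sset P r b"
  unfolding Sset_def by force

definition exponent_vec :: "'a set \<Rightarrow> int \<Rightarrow> ('a \<Rightarrow> int) \<Rightarrow> ('a option \<Rightarrow>\<^sub>0 int)" where
  "exponent_vec P N g =
     Abs_poly_mapping (\<lambda>z. case z of None \<Rightarrow> N | Some y \<Rightarrow> if y \<in> P then g y else 0)"

lemma lookup_exponent_vec:
  assumes "finite P"
  shows "Poly_Mapping.lookup (exponent_vec P N g) None = N"
    and "y \<in> P \<Longrightarrow> Poly_Mapping.lookup (exponent_vec P N g) (Some y) = g y"
    and "Poly_Mapping.keys (exponent_vec P N g) \<subseteq> Pminus P"
proof -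
  let ?f = "\<lambda>z. case z of None \<Rightarrow> N | Some y \<Rightarrow> if y \<in> P then g y else 0"
  have supp: "{z. ?f z \<noteq> 0} \<subseteq> Pminus P"
  proof
    fix z assume "z \<in> {z. ?f z \<noteq> 0}"
    thus "z \<in> Pminus P" by (cases z) (auto simp: Pminus_def split: if_splits)
  qed
  hence "finite {z. ?f z \<noteq> 0}"
    using finite_Pminus[OF assms] finite_subset by blast
  hence lookup: "Poly_Mapping.lookup (exponent_vec P N g) = ?f"
    by (simp add: exponent_vec_def)
  show "Poly_Mapping.lookup (exponent_vec P N g) None = N"
    and "y \<in> P \<Longrightarrow> Poly_Mapping.lookup (exponent_vec P N g) (Some y) = g y"
    by (simp_all add: lookup)
  show "Poly_Mapping.keys (exponent_vec P N g) \<subseteq> Pminus P"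
    using supp by (simp add: lookup keys.rep_eq)
qed

lemma constant_exponent_vec_in_Sset:
  assumes "finite P" "s \<ge> a" "N \<ge> \<bar>s\<bar> * int (card P) + a"
  shows "exponent_vec P N (\<lambda>_. s) \<in> Sset P r a"
proof -
  have "(\<Sum>x\<in>C. Poly_Mapping.lookup (exponent_vec P N (\<lambda>_. s)) (Some x)) + a \<le> N"
    if C: "is_max_chain P r C" for C
  proof -
    have CP: "C \<subseteq> P" using max_chain_subset[OF C] .
    have "(\<Sum>x\<in>C. Poly_Mapping.lookup (exponent_vec P N (\<lambda>_. s)) (Some x)) = s * int (card C)"
      using CP by (simp add: lookup_exponent_vec[OF assms(1)] subset_iff)
    also have "\<dots> \<le> \<bar>s\<bar> * int (card C)"
      by (simp add: mult_right_mono)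
    also have "\<dots> \<le> \<bar>s\<bar> * int (card P)"
      using card_mono[OF assms(1) CP] by (simp add: mult_left_mono)
    finally show ?thesis using assms(3) by linarith
  qed
  thus ?thesis
    using assms by (simp add: Sset_def lookup_exponent_vec)
qed

text \<open>The value \<open>a\<close> on \<open>P\<close>, raised by \<open>\<bar>a\<bar> |P|\<close> on \<open>C\<close>: the raise outweighs any
  difference in the sizes of two maximal chains, while every maximal chain other than
  \<open>C\<close> misses a point of \<open>C\<close>.\<close>

definition chain_witness :: "'a set \<Rightarrow> 'a set \<Rightarrow> int \<Rightarrow> ('a option \<Rightarrow>\<^sub>0 int)" where
  "chain_witness P C a = exponent_vec P ((a + \<bar>a\<bar> * int (card P)) * int (card C) + a)
      (\<lambda>y. if y \<in> C then a + \<bar>a\<bar> * int (card P) else a)"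

lemma sum_chain_witness:
  assumes "finite P" "D \<subseteq> P"
  shows "(\<Sum>x\<in>D. Poly_Mapping.lookup (chain_witness P C a) (Some x))
     = a * int (card D) + \<bar>a\<bar> * int (card P) * int (card (D \<inter> C))"
proof -
  let ?t = "\<bar>a\<bar> * int (card P)"
  have "(\<Sum>x\<in>D. Poly_Mapping.lookup (chain_witness P C a) (Some x)) = (\<Sum>x\<in>D. a + (if x \<in> C then ?t else 0))"
    using assms(2) by (intro sum.cong) (auto simp: chain_witness_def lookup_exponent_vec[OF assms(1)])
  also have "\<dots> = a * int (card D) + ?t * int (card (D \<inter> C))"
    using finite_subset[OF assms(2,1)] by (simp add: sum.distrib sum.If_cases Int_def)
  finally show ?thesis .
qed

lemma chain_witness_tight:
  assumes "finite P" "is_max_chain P r C"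
  shows "Poly_Mapping.lookup (chain_witness P C a) None
       = (\<Sum>x\<in>C. Poly_Mapping.lookup (chain_witness P C a) (Some x)) + a"
  using sum_chain_witness[OF assms(1) max_chain_subset[OF assms(2)], of C a]
  by (simp add: chain_witness_def lookup_exponent_vec[OF assms(1)] algebra_simps)

lemma chain_witness_in_Sset:
  assumes fin: "finite P" and C: "is_max_chain P r C"
  shows "chain_witness P C a \<in> Sset P r a"
proof -
  let ?t = "\<bar>a\<bar> * int (card P)"
  have CP: "C \<subseteq> P" using max_chain_subset[OF C] .
  have chain_ineq: "a * int (card D) + ?t * int (card (D \<inter> C)) \<le> (a + ?t) * int (card C)"
    if D: "is_max_chain P r D" for D
  proof (cases "C \<subseteq> D")
    case True
    hence "D = C" using C D unfolding is_max_chain_def by blast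
    thus ?thesis by (simp add: algebra_simps)
  next
    case False
    hence "card (D \<inter> C) < card C"
      using finite_subset[OF CP fin] by (intro psubset_card_mono) auto
    hence "?t * int (card (D \<inter> C)) \<le> ?t * (int (card C) - 1)"
      by (intro mult_left_mono) auto
    moreover have "a * (int (card D) - int (card C)) \<le> ?t"
    proof -
      have "a * (int (card D) - int (card C)) \<le> \<bar>a\<bar> * \<bar>int (card D) - int (card C)\<bar>"
        by (metis abs_ge_self abs_mult)
      also have "\<dots> \<le> ?t"
        using card_mono[OF fin CP] card_mono[OF fin max_chain_subset[OF D]]
        by (intro mult_left_mono) auto
      finally show ?thesis .
    qed
    ultimately show ?thesis by (simp add: algebra_simps)
  qed
  have "(\<Sum>x\<in>D. Poly_Mapping.lookup (chain_witness P C a) (Some x)) + a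
      \<le> Poly_Mapping.lookup (chain_witness P C a) None" if D: "is_max_chain P r D" for D
    using chain_ineq[OF D] sum_chain_witness[OF fin max_chain_subset[OF D], of C a]
    by (simp add: chain_witness_def lookup_exponent_vec[OF fin])
  moreover have "Poly_Mapping.lookup (chain_witness P C a) (Some x) \<ge> a" if "x \<in> P" for x
    using that by (simp add: chain_witness_def lookup_exponent_vec[OF fin])
  ultimately show ?thesis
    using lookup_exponent_vec(3)[OF fin] by (simp add: Sset_def chain_witness_def)
qed

lemma Sset_residual:
  assumes fin: "finite P" and shift: "\<And>\<eta>. \<eta> \<in> Sset P r a \<Longrightarrow> \<zeta> + \<eta> \<in> Sset P r c"
  shows "\<zeta> \<in> Sset P r (c - a)"
proof -
  define \<eta>\<^sub>0 where "\<eta>\<^sub>0 = exponent_vec P (\<bar>a\<bar> * int (card P) + a) (\<lambda>_. a)"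
  have \<eta>\<^sub>0: "\<eta>\<^sub>0 \<in> Sset P r a"
    unfolding \<eta>\<^sub>0_def by (rule constant_exponent_vec_in_Sset[OF fin]) auto
  have \<zeta>\<eta>\<^sub>0: "\<zeta> + \<eta>\<^sub>0 \<in> Sset P r c" using shift[OF \<eta>\<^sub>0] .
  have "Poly_Mapping.keys \<zeta> \<subseteq> Pminus P"
  proof
    fix z assume z: "z \<in> Poly_Mapping.keys \<zeta>"
    show "z \<in> Pminus P"
    proof (rule ccontr)
      assume "z \<notin> Pminus P"
      hence "z \<notin> Poly_Mapping.keys (\<zeta> + \<eta>\<^sub>0)" "z \<notin> Poly_Mapping.keys \<eta>\<^sub>0"
        using \<zeta>\<eta>\<^sub>0 \<eta>\<^sub>0 by (auto simp: Sset_def)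
      thus False using z by (simp add: in_keys_iff lookup_add)
    qed
  qed
  moreover have "Poly_Mapping.lookup \<zeta> (Some x) \<ge> c - a" if "x \<in> P" for x
    using \<zeta>\<eta>\<^sub>0 that by (auto simp: Sset_def \<eta>\<^sub>0_def lookup_add lookup_exponent_vec[OF fin])
  moreover have "Poly_Mapping.lookup \<zeta> None \<ge> (\<Sum>x\<in>C. Poly_Mapping.lookup \<zeta> (Some x)) + (c - a)"
    if C: "is_max_chain P r C" for C
  proof -
    have "\<zeta> + chain_witness P C a \<in> Sset P r c"
      using shift[OF chain_witness_in_Sset[OF fin C]] .
    hence "Poly_Mapping.lookup (\<zeta> + chain_witness P C a) None
        \<ge> (\<Sum>x\<in>C. Poly_Mapping.lookup (\<zeta> + chain_witness P C a) (Some x)) + c"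
      using C by (auto simp: Sset_def)
    thus ?thesis
      using chain_witness_tight[OF fin C, of a] by (simp add: lookup_add sum.distrib)
  qed
  ultimately show ?thesis by (simp add: Sset_def)
qed

lemma emb_mult: "emb (f * g) = emb f * emb g"
  by (simp add: emb_def)

lemma emb_add: "emb (f + g) = emb f + emb g"
  by (simp add: emb_def)

lemma emb_1: "emb 1 = 1"
  by (simp add: emb_def One_fract_def)

lemma emb_0: "emb 0 = 0"
  by (simp add: emb_def Zero_fract_def)

lemma emb_eq_iff: "emb f = emb g \<longleftrightarrow> f = g"
  by (simp add: emb_def eq_fract)

lemma Tmon_add: "Tmon (a + b) = (Tmon a * Tmon b :: ('a, 'k::field) laurent)"
  by (simp add: Tmon_def mult_single)

lemma Tmon_0: "Tmon 0 = (1 :: ('a, 'k::field) laurent)"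
  by (simp add: Tmon_def)

lemma keys_Tmon: "Poly_Mapping.keys (Tmon \<xi> :: ('a, 'k::field) laurent) = {\<xi>}"
  by (simp add: Tmon_def)

lemma keys_mult_Tmon:
  fixes h :: "('a::linorder, 'k::field) laurent"
  assumes "\<zeta> \<in> Poly_Mapping.keys h"
  shows "\<zeta> + \<eta> \<in> Poly_Mapping.keys (h * Tmon \<eta>)"
proof -
  have "(h * Tmon \<eta>) * Tmon (- \<eta>) = h"
    by (simp add: mult.assoc Tmon_add[symmetric] Tmon_0)
  hence "\<zeta> \<in> Poly_Mapping.keys ((h * Tmon \<eta>) * Tmon (- \<eta>))"
    using assms by (simp only:)
  then obtain w b where "\<zeta> = w + b" "w \<in> Poly_Mapping.keys (h * Tmon \<eta>)"
    "b \<in> Poly_Mapping.keys (Tmon (- \<eta>) :: ('a, 'k) laurent)"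
    using keys_mult by blast
  thus ?thesis by (simp add: keys_Tmon)
qed

lemma mult_in_mon_span:
  assumes "f \<in> mon_span P r a" "g \<in> mon_span P r b"
  shows "(f * g :: ('a, 'k::field) laurent) \<in> mon_span P r (a + b)"
  using assms keys_mult[of f g] Sset_add by (fastforce simp: mon_span_def)

definition mon_ideal :: "'a::linorder set \<Rightarrow> 'a rel \<Rightarrow> int \<Rightarrow> ('a, 'k::field) laurent fract set" where
  "mon_ideal P r n = emb ` mon_span P r n"

lemma Tmon_in_mon_ideal_iff:
  "emb (Tmon \<xi> :: ('a::linorder, 'k::field) laurent) \<in> mon_ideal P r n \<longleftrightarrow> \<xi> \<in> Sset P r n"
  by (auto simp: mon_ideal_def mon_span_def emb_eq_iff keys_Tmon)

lemma zero_in_mon_ideal: "0 \<in> mon_ideal P r n"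
  by (force simp: mon_ideal_def mon_span_def emb_0[symmetric])

lemma add_in_mon_ideal:
  assumes "x \<in> mon_ideal P r n" "y \<in> mon_ideal P r n"
  shows "x + y \<in> mon_ideal P r n"
proof -
  obtain f g where "f \<in> mon_span P r n" "g \<in> mon_span P r n" "x = emb f" "y = emb g"
    using assms unfolding mon_ideal_def by blast
  moreover have "f + g \<in> mon_span P r n" if "f \<in> mon_span P r n" "g \<in> mon_span P r n" for f g
    using that keys_add[of f g] by (auto simp: mon_span_def)
  ultimately show ?thesis
    unfolding mon_ideal_def by (metis emb_add image_eqI)
qed

lemma mult_in_mon_ideal:
  assumes "x \<in> mon_ideal P r a" "y \<in> mon_ideal P r b"
  shows "x * y \<in> mon_ideal P r (a + b)"
proof -
  obtain f g where "f \<in> mon_span P r a" "g \<in> mon_span P r b" "x = emb f" "y = emb g"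
    using assms unfolding mon_ideal_def by blast
  thus ?thesis
    unfolding mon_ideal_def by (metis emb_mult image_eqI mult_in_mon_span)
qed

lemma mon_ideal_antimono: "b \<le> a \<Longrightarrow> mon_ideal P r a \<subseteq> mon_ideal P r b"
  using Sset_antimono[of b a P r] by (auto simp: mon_ideal_def mon_span_def)

lemma mon_ideal_in_quot_field:
  fixes x :: "('a::linorder, 'k::field) laurent fract"
  assumes fin: "finite P" and x: "x \<in> mon_ideal P r m"
  shows "x \<in> quot_field (mon_ideal P r 0)"
proof -
  define u :: "('a, 'k) laurent fract"
    where "u = emb (Tmon (exponent_vec P (\<bar>m\<bar> * int (card P) + \<bar>m\<bar>) (\<lambda>_. \<bar>m\<bar>)))"
  have u: "u \<in> mon_ideal P r \<bar>m\<bar>"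
    unfolding u_def Tmon_in_mon_ideal_iff by (rule constant_exponent_vec_in_Sset[OF fin]) auto
  hence "u \<in> mon_ideal P r 0"
    by (meson abs_ge_zero mon_ideal_antimono subsetD)
  moreover have "x * u \<in> mon_ideal P r 0"
  proof -
    have "0 \<le> m + \<bar>m\<bar>"
      by simp
    thus ?thesis
      using mult_in_mon_ideal[OF x u] mon_ideal_antimono[of 0 "m + \<bar>m\<bar>" P r] by blast
  qed
  moreover have "u \<noteq> 0"
    unfolding u_def by (metis emb_eq_iff emb_0 keys_Tmon keys_zero empty_not_insert)
  ultimately show ?thesis
    unfolding quot_field_def by (intro CollectI exI[of _ "x * u"] exI[of _ u]) simp
qed

text \<open>Testing q on one monomial of E(a) shows that q is a Laurent polynomial; testing it on
  all of them bounds its exponents via \<open>Sset_residual\<close>.\<close>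

lemma mon_ideal_residual:
  fixes q :: "('a::linorder, 'k::field) laurent fract"
  assumes fin: "finite P" and test: "\<And>x. x \<in> mon_ideal P r a \<Longrightarrow> q * x \<in> mon_ideal P r c"
  shows "q \<in> mon_ideal P r (c - a)"
proof -
  have Tmon_test: "\<exists>f\<in>mon_span P r c. q * emb (Tmon \<eta>) = emb f" if "\<eta> \<in> Sset P r a" for \<eta>
  proof -
    have "emb (Tmon \<eta>) \<in> mon_ideal P r a"
      using that by (simp add: Tmon_in_mon_ideal_iff)
    from test[OF this] show ?thesis
      by (auto simp: mon_ideal_def)
  qed
  define \<eta>\<^sub>0 where "\<eta>\<^sub>0 = exponent_vec P (\<bar>a\<bar> * int (card P) + a) (\<lambda>_. a)"
  have "\<eta>\<^sub>0 \<in> Sset P r a"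
    unfolding \<eta>\<^sub>0_def by (rule constant_exponent_vec_in_Sset[OF fin]) auto
  then obtain g where g: "q * emb (Tmon \<eta>\<^sub>0) = emb g"
    using Tmon_test by blast
  define h where "h = g * Tmon (- \<eta>\<^sub>0)"
  have qh: "q = emb h"
  proof -
    have "q = q * emb (Tmon \<eta>\<^sub>0 * Tmon (- \<eta>\<^sub>0))"
      by (simp add: Tmon_add[symmetric] Tmon_0 emb_1)
    also have "\<dots> = emb h"
      by (simp add: h_def emb_mult g[symmetric] mult.assoc)
    finally show ?thesis .
  qed
  have "\<zeta> \<in> Sset P r (c - a)" if \<zeta>: "\<zeta> \<in> Poly_Mapping.keys h" for \<zeta>
  proof (rule Sset_residual[OF fin])
    fix \<eta> assume "\<eta> \<in> Sset P r a"
    then obtain f where "f \<in> mon_span P r c" "q * emb (Tmon \<eta>) = emb f"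
      using Tmon_test by blast
    moreover from this have "h * Tmon \<eta> = f"
      using qh by (simp add: emb_mult[symmetric] emb_eq_iff)
    ultimately show "\<zeta> + \<eta> \<in> Sset P r c"
      using keys_mult_Tmon[OF \<zeta>, of \<eta>] by (auto simp: mon_span_def)
  qed
  thus ?thesis
    using qh unfolding mon_ideal_def mon_span_def by blast
qed

lemma colon_ideal_prod:
  fixes R :: "'f::field set"
  assumes "0 \<in> R" "\<And>a b. a \<in> R \<Longrightarrow> b \<in> R \<Longrightarrow> a + b \<in> R" "\<And>a b. a \<in> R \<Longrightarrow> b \<in> R \<Longrightarrow> a * b \<in> R"
  shows "colon R (ideal_prod R I J) = {q \<in> quot_field R. \<forall>x\<in>I. \<forall>y\<in>J. q * (x * y) \<in> R}"
proof (intro equalityI subsetI)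
  fix q assume "q \<in> colon R (ideal_prod R I J)"
  thus "q \<in> {q \<in> quot_field R. \<forall>x\<in>I. \<forall>y\<in>J. q * (x * y) \<in> R}"
    unfolding colon_def ideal_prod_def by blast
next
  fix q assume q: "q \<in> {q \<in> quot_field R. \<forall>x\<in>I. \<forall>y\<in>J. q * (x * y) \<in> R}"
  have "ideal_prod R I J \<subseteq> {z. q * z \<in> R}"
    unfolding ideal_prod_def
    using q assms by (intro Inter_lower) (auto simp: distrib_left mult.left_commute[of q])
  with q show "q \<in> colon R (ideal_prod R I J)"
    unfolding colon_def by blast
qed

lemma colon_mon_ideal:
  assumes fin: "finite P"
  shows "colon (mon_ideal P r 0) (mon_ideal P r a) = (mon_ideal P r (- a) :: ('a::linorder, 'k::field) laurent fract set)"
  unfolding colon_def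
  using mon_ideal_residual[OF fin, of r a _ 0] mult_in_mon_ideal[of _ P r "- a" _ a]
    mon_ideal_in_quot_field[OF fin]
  by fastforce

lemma colon_ideal_prod_mon_ideal:
  assumes fin: "finite P"
  shows "colon (mon_ideal P r 0) (ideal_prod (mon_ideal P r 0) (mon_ideal P r a) (mon_ideal P r b))
       = (mon_ideal P r (- (a + b)) :: ('a::linorder, 'k::field) laurent fract set)"
    (is "_ = ?E (- (a + b))")
proof -
  have "q \<in> ?E (- (a + b))" if "\<forall>x\<in>?E a. \<forall>y\<in>?E b. q * (x * y) \<in> ?E 0" for q
  proof -
    have "q * x \<in> ?E (0 - b)" if "x \<in> ?E a" for x
      using that \<open>\<forall>x\<in>?E a. _\<close> by (intro mon_ideal_residual[OF fin]) (simp add: mult.assoc)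
    hence "q \<in> ?E (0 - b - a)"
      by (rule mon_ideal_residual[OF fin])
    moreover have "0 - b - a = - (a + b)"
      by simp
    ultimately show ?thesis
      by (simp only:)
  qed
  moreover have "q * (x * y) \<in> ?E 0" if "q \<in> ?E (- (a + b))" "x \<in> ?E a" "y \<in> ?E b" for q x y
    using mult_in_mon_ideal[OF that(1) mult_in_mon_ideal[OF that(2,3)]] by simp
  ultimately show ?thesis
    using mon_ideal_in_quot_field[OF fin]
    by (subst colon_ideal_prod) (auto intro: zero_in_mon_ideal add_in_mon_ideal
        mult_in_mon_ideal[where a = 0 and b = 0, simplified])
qed

lemma div_prod_mon_ideal:
  assumes "finite P"
  shows "div_prod (mon_ideal P r 0) (mon_ideal P r a) (mon_ideal P r b)
       = (mon_ideal P r (a + b) :: ('a::linorder, 'k::field) laurent fract set)"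
  unfolding div_prod_def
  by (simp add: colon_ideal_prod_mon_ideal[OF assms] colon_mon_ideal[OF assms] add.commute)

lemma div_pow_nat_mon_ideal:
  assumes "finite P"
  shows "div_pow_nat (mon_ideal P r 0) (mon_ideal P r s) k
       = (mon_ideal P r (s * int k) :: ('a::linorder, 'k::field) laurent fract set)"
  by (induction k) (simp_all add: div_prod_mon_ideal[OF assms] algebra_simps)

lemma omega_pow_eq_mon_ideal:
  assumes fin: "finite P"
  shows "omega_pow P r n = (mon_ideal P r n :: ('a::linorder, 'k::field) laurent fract set)"
proof -
  have "ehrhart_ring P r = (mon_ideal P r 0 :: ('a, 'k) laurent fract set)"
    and "canonical_ideal P r = (mon_ideal P r 1 :: ('a, 'k) laurent fract set)"
    by (simp_all add: ehrhart_ring_def canonical_ideal_def mon_ideal_def)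
  thus ?thesis
    using div_pow_nat_mon_ideal[OF fin, of r 1 "nat n"] div_pow_nat_mon_ideal[OF fin, of r "-1" "nat (- n)"]
    by (cases "n \<ge> 0") (simp_all add: omega_pow_def div_pow_def colon_mon_ideal[OF fin])
qed

theorem mainTheorem2:
  fixes P :: "'a::linorder set" and r :: "'a rel" and n :: int
    and \<xi> :: "'a option \<Rightarrow>\<^sub>0 int"
  assumes "finite P" and "partial_order_on P r"
    and "Poly_Mapping.keys \<xi> \<subseteq> Pminus P"
  shows "(emb (Tmon \<xi> :: ('a, 'k::field) laurent) \<in> omega_pow P r n \<longleftrightarrow> \<xi> \<in> Sset P r n)
       \<and> omega_pow P r n = emb ` (mon_span P r n :: ('a, 'k) laurent set)"
proof -
  have "omega_pow P r n = (mon_ideal P r n :: ('a, 'k) laurent fract set)"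
    by (rule omega_pow_eq_mon_ideal[OF assms(1)])
  thus ?thesis
    using Tmon_in_mon_ideal_iff[of \<xi> P r n] by (simp add: mon_ideal_def)
qed

end
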